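(* Let $G=(V,E,\mathcal F)$ be a map on a closed orientable surface with a reference orientation, and let $a,b\in E$ be two edges. Then \[ (\eta_a)_b=\begin{cases}(\pi_b)_{h(a)}-(\pi_b)_{t(a)}+(\pi^*_b)_{r(a)}-(\pi^*_b)_{l(a)}+1, & \text{if } a=b,\\ (\pi_b)_{h(a)}-(\pi_b)_{t(a)}+(\pi^*_b)_{r(a)}-(\pi^*_b)_{l(a)}, & \text{otherwise.}\end{cases} \]
   Context: A map is a finite graph embedded in the surface so that every face is an open disc; each edge $e$ has tail $t(e)$, head $h(e)$, right shore $r(e)\in\mathcal F$ and left shore $l(e)\in\mathcal F$. For $v\in V$, $\delta v\in\mathbb R^E$ has entries $1$ on edges with head $v$, $-1$ on edges with tail $v$, $0$ otherwise; for $F\in\mathcal F$, $\partial F\in\mathbb R^E$ has entries $1$ on edges with $r(e)=F$, $-1$ on edges with $l(e)=F$, $0$ otherwise. $\mathcal C$ is the space of smooth circulations: vectors $\phi\in\mathbb R^E$ with $\phi\cdot\delta v=0$ for all $v$ and $\phi\cdot\partial F=0$ for all $F$. For $e\in E$, $\chi_e$ is the unit vector of $e$ and $\eta_e$ is the orthogonal projection of $\chi_e$ onto $\mathcal C$. Harmonic functions: for a connected graph $H$ with node set $W$ and nodes $a,b\in W$, $\pi_{a,b}\in\mathbb R^W$ is the unique vector with $\sum_{u}\pi_u=0$ and, for every node $v$, $\sum_{u:\,uv\in E(H)}\pi_u-d_v\pi_v$ equal to $1$ if $v=b$, $-1$ if $v=a$, and $0$ otherwise (neighbors counted with edge multiplicity,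 $d_v$ the degree). For an edge $e$ of $G$, $\pi_e=\pi_{t(e),h(e)}$ computed in $G$. The dual map $G^*$ has node set $\mathcal F$ and edge set $E$, where edge $e$ joins $l(e)$ (its tail) to $r(e)$ (its head); $\pi^*_e=\pi_{l(e),r(e)}$ computed in $G^*$. *)

theory Defs
  imports Main "HOL.Real"
begin

text \<open>Maps on closed orientable surfaces, encoded combinatorially by rotation systems.
  Edges form a finite set E; each edge e carries two darts (e,True) (oriented along the
  reference orientation, from tail to head) and (e,False) (its reversal).
  A permutation sigma of the darts gives the cyclic (counterclockwise) order of darts
  around their common origin.\<close>

definition darts :: "'e set \<Rightarrow> ('e \<times> bool) set" where
  "darts E = E \<times> (UNIV :: bool set)"

definition alpha :: "'e \<times> bool \<Rightarrow> 'e \<times> bool" where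
  "alpha d = (fst d, \<not> snd d)"

definition orb :: "('a \<Rightarrow> 'a) \<Rightarrow> 'a \<Rightarrow> 'a set" where
  "orb f d = range (\<lambda>n. (f ^^ n) d)"

definition facep :: "('e \<times> bool \<Rightarrow> 'e \<times> bool) \<Rightarrow> 'e \<times> bool \<Rightarrow> 'e \<times> bool" where
  "facep \<sigma> = \<sigma> \<circ> alpha"

definition is_map :: "'e set \<Rightarrow> ('e \<times> bool \<Rightarrow> 'e \<times> bool) \<Rightarrow> bool" where
  "is_map E \<sigma> \<longleftrightarrow> finite E \<and> bij_betw \<sigma> (darts E) (darts E) \<and>
     (\<forall>d\<in>darts E. \<forall>d'\<in>darts E.
        (d, d') \<in> ({(x, \<sigma> x) | x. True} \<union> {(x, alpha x) | x. True})\<^sup>*)"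

definition tailv :: "('e \<times> bool \<Rightarrow> 'e \<times> bool) \<Rightarrow> 'e \<Rightarrow> ('e \<times> bool) set" where
  "tailv \<sigma> e = orb \<sigma> (e, True)"

definition headv :: "('e \<times> bool \<Rightarrow> 'e \<times> bool) \<Rightarrow> 'e \<Rightarrow> ('e \<times> bool) set" where
  "headv \<sigma> e = orb \<sigma> (e, False)"

definition rshore :: "('e \<times> bool \<Rightarrow> 'e \<times> bool) \<Rightarrow> 'e \<Rightarrow> ('e \<times> bool) set" where
  "rshore \<sigma> e = orb (facep \<sigma>) (e, True)"

definition lshore :: "('e \<times> bool \<Rightarrow> 'e \<times> bool) \<Rightarrow> 'e \<Rightarrow> ('e \<times> bool) set" where
  "lshore \<sigma> e = orb (facep \<sigma>) (e, False)"

definition verts :: "'e set \<Rightarrow> ('e \<times> bool \<Rightarrow> 'e \<times> bool) \<Rightarrow> ('e \<times> bool) set set" where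
  "verts E \<sigma> = orb \<sigma> ` darts E"

definition faces :: "'e set \<Rightarrow> ('e \<times> bool \<Rightarrow> 'e \<times> bool) \<Rightarrow> ('e \<times> bool) set set" where
  "faces E \<sigma> = orb (facep \<sigma>) ` darts E"

text \<open>Vectors in R^E are functions 'e => real vanishing outside E.\<close>

definition ip :: "'e set \<Rightarrow> ('e \<Rightarrow> real) \<Rightarrow> ('e \<Rightarrow> real) \<Rightarrow> real" where
  "ip E x y = (\<Sum>e\<in>E. x e * y e)"

definition deltav :: "'e set \<Rightarrow> ('e \<times> bool \<Rightarrow> 'e \<times> bool) \<Rightarrow> ('e \<times> bool) set \<Rightarrow> 'e \<Rightarrow> real" where
  "deltav E \<sigma> v = (\<lambda>e. if e \<in> E then (if headv \<sigma> e = v then 1 else 0) - (if tailv \<sigma> e = v then 1 else 0) else 0)"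

definition bdry :: "'e set \<Rightarrow> ('e \<times> bool \<Rightarrow> 'e \<times> bool) \<Rightarrow> ('e \<times> bool) set \<Rightarrow> 'e \<Rightarrow> real" where
  "bdry E \<sigma> F = (\<lambda>e. if e \<in> E then (if rshore \<sigma> e = F then 1 else 0) - (if lshore \<sigma> e = F then 1 else 0) else 0)"

definition circs :: "'e set \<Rightarrow> ('e \<times> bool \<Rightarrow> 'e \<times> bool) \<Rightarrow> ('e \<Rightarrow> real) set" where
  "circs E \<sigma> = {x. (\<forall>e. e \<notin> E \<longrightarrow> x e = 0) \<and>
      (\<forall>v\<in>verts E \<sigma>. ip E x (deltav E \<sigma> v) = 0) \<and>
      (\<forall>F\<in>faces E \<sigma>. ip E x (bdry E \<sigma> F) = 0)}"

definition chi :: "'e \<Rightarrow> 'e \<Rightarrow> real" where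
  "chi a = (\<lambda>e. if e = a then 1 else 0)"

definition eta :: "'e set \<Rightarrow> ('e \<times> bool \<Rightarrow> 'e \<times> bool) \<Rightarrow> 'e \<Rightarrow> 'e \<Rightarrow> real" where
  "eta E \<sigma> a = (THE x. x \<in> circs E \<sigma> \<and> (\<forall>y\<in>circs E \<sigma>. ip E (\<lambda>e. chi a e - x e) y = 0))"

definition harm :: "'w set \<Rightarrow> 'e set \<Rightarrow> ('e \<Rightarrow> 'w) \<Rightarrow> ('e \<Rightarrow> 'w) \<Rightarrow> 'w \<Rightarrow> 'w \<Rightarrow> 'w \<Rightarrow> real" where
  "harm W Es en1 en2 a b = (THE p. (\<forall>u. u \<notin> W \<longrightarrow> p u = 0) \<and> (\<Sum>u\<in>W. p u) = 0 \<and>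
     (\<forall>v\<in>W. (\<Sum>e\<in>{e\<in>Es. en1 e = v}. p (en2 e)) + (\<Sum>e\<in>{e\<in>Es. en2 e = v}. p (en1 e))
            - real (card {e\<in>Es. en1 e = v} + card {e\<in>Es. en2 e = v}) * p v
          = (if v = b then 1 else 0) - (if v = a then 1 else 0)))"

definition pie :: "'e set \<Rightarrow> ('e \<times> bool \<Rightarrow> 'e \<times> bool) \<Rightarrow> 'e \<Rightarrow> ('e \<times> bool) set \<Rightarrow> real" where
  "pie E \<sigma> e = harm (verts E \<sigma>) E (tailv \<sigma>) (headv \<sigma>) (tailv \<sigma> e) (headv \<sigma> e)"

definition piestar :: "'e set \<Rightarrow> ('e \<times> bool \<Rightarrow> 'e \<times> bool) \<Rightarrow> 'e \<Rightarrow> ('e \<times> bool) set \<Rightarrow> real" where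
  "piestar E \<sigma> e = harm (faces E \<sigma>) E (lshore \<sigma>) (rshore \<sigma>) (lshore \<sigma> e) (rshore \<sigma> e)"

end

(* Put x_b = chi_b + grad pi_b + cograd pi*_b, where (grad p) e = p (h e) - p (t e) and
   (cograd q) e = q (r e) - q (l e).  The gradient is a combination of the vectors delta v and
   the cogradient one of the vectors dF, so chi_b - x_b is orthogonal to every smooth
   circulation.  Face boundaries are orthogonal to vertex coboundaries, and the Laplace
   equations of pi_b and pi*_b cancel the components of chi_b along delta v and dF, so x_b is
   smooth; hence x_b = eta_b.  The theorem is then the symmetry (eta_a)_b = eta_a . eta_b =
   (eta_b)_a of the orthogonal projection. *)

theory Submission
  imports Defs "Jordan_Normal_Form.Determinant"
begin

section \<open>Square linear systems\<close>

lemma mat_vec_solvable_if_injective: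
  fixes A :: "'a :: field mat"
  assumes A: "A \<in> carrier_mat n n"
    and inj: "\<And>v. v \<in> carrier_vec n \<Longrightarrow> A *\<^sub>v v = 0\<^sub>v n \<Longrightarrow> v = 0\<^sub>v n"
    and c: "c \<in> carrier_vec n"
  obtains x where "x \<in> carrier_vec n" "A *\<^sub>v x = c"
proof -
  have "det A \<noteq> 0"
    using inj by (auto simp: det_0_iff_vec_prod_zero_field[OF A])
  from det_non_zero_imp_unit[OF A this, of "()"]
  obtain B where B: "B \<in> carrier_mat n n" "A * B = 1\<^sub>m n"
    unfolding Units_def ring_mat_def by auto
  show thesis
  proof
    show "B *\<^sub>v c \<in> carrier_vec n" using B c by simp
    show "A *\<^sub>v (B *\<^sub>v c) = c" using assoc_mult_mat_vec[OF A B(1) c] B c by simp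
  qed
qed

lemma linear_system_solvable_if_injective:
  fixes K :: "'w \<Rightarrow> 'w \<Rightarrow> 'a :: field"
  assumes W: "finite W"
    and inj: "\<And>p. \<forall>u\<in>W. (\<Sum>w\<in>W. K u w * p w) = 0 \<Longrightarrow> \<forall>u\<in>W. p u = 0"
  obtains p where "\<forall>u\<in>W. (\<Sum>w\<in>W. K u w * p w) = c u"
proof -
  define n where "n = card W"
  obtain g where g: "bij_betw g {0..<n} W"
    using ex_bij_betw_nat_finite[OF W] n_def by blast
  define h where "h = inv_into {0..<n} g"
  have h: "h u < n" "g (h u) = u" if "u \<in> W" for u
    using that g bij_betw_inv_into_right[OF g] bij_betw_apply[OF bij_betw_inv_into[OF g]]
    by (auto simp: h_def)
  have gW: "g j \<in> W" and hg: "h (g j) = j" if "j < n" for j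
    using that g bij_betw_apply[OF g] bij_betw_inv_into_left[OF g] by (auto simp: h_def)
  define M where "M = mat n n (\<lambda>(i, j). K (g i) (g j))"
  have M: "M \<in> carrier_mat n n" by (simp add: M_def)
  have M_mult: "(M *\<^sub>v v) $ h u = (\<Sum>w\<in>W. K u w * v $ h w)"
    if v: "v \<in> carrier_vec n" and u: "u \<in> W" for v u
  proof -
    have "(M *\<^sub>v v) $ h u = (\<Sum>j\<in>{0..<n}. K u (g j) * v $ j)"
      using v h[OF u] by (simp add: M_def scalar_prod_def)
    also have "\<dots> = (\<Sum>w\<in>W. K u w * v $ h w)"
      using hg by (simp add: sum.reindex_bij_betw[OF g, symmetric])
    finally show ?thesis .
  qed
  have "v = 0\<^sub>v n" if v: "v \<in> carrier_vec n" and Mv: "M *\<^sub>v v = 0\<^sub>v n" for v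
  proof (rule eq_vecI)
    have "\<forall>u\<in>W. (\<Sum>w\<in>W. K u w * v $ h w) = 0"
      using M_mult[OF v] Mv h by (metis index_zero_vec(1))
    then have v0: "\<forall>u\<in>W. v $ h u = 0" by (rule inj)
    fix j assume "j < dim_vec (0\<^sub>v n :: 'a vec)"
    then show "v $ j = 0\<^sub>v n $ j" using v0 gW hg by force
  qed (use v in simp)
  then obtain x where x: "x \<in> carrier_vec n" "M *\<^sub>v x = vec n (c \<circ> g)"
    using mat_vec_solvable_if_injective[OF M] by (metis vec_carrier)
  show thesis
  proof (rule that, intro ballI)
    fix u assume u: "u \<in> W"
    show "(\<Sum>w\<in>W. K u w * x $ h w) = c u"
      using M_mult[OF x(1) u] x(2) h[OF u] by simp
  qed
qed

section \<open>Graph Laplacians\<close>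

definition incidence :: "('e \<Rightarrow> 'w) \<Rightarrow> ('e \<Rightarrow> 'w) \<Rightarrow> 'w \<Rightarrow> 'e \<Rightarrow> real" where
  "incidence en1 en2 v e = (if en2 e = v then 1 else 0) - (if en1 e = v then 1 else 0)"

definition gradient :: "('e \<Rightarrow> 'w) \<Rightarrow> ('e \<Rightarrow> 'w) \<Rightarrow> ('w \<Rightarrow> real) \<Rightarrow> 'e \<Rightarrow> real" where
  "gradient en1 en2 p e = p (en2 e) - p (en1 e)"

definition laplacian :: "'e set \<Rightarrow> ('e \<Rightarrow> 'w) \<Rightarrow> ('e \<Rightarrow> 'w) \<Rightarrow> ('w \<Rightarrow> real) \<Rightarrow> 'w \<Rightarrow> real" where
  "laplacian Es en1 en2 p v = - (\<Sum>e\<in>Es. incidence en1 en2 v e * gradient en1 en2 p e)"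

definition adjacency :: "'e set \<Rightarrow> ('e \<Rightarrow> 'w) \<Rightarrow> ('e \<Rightarrow> 'w) \<Rightarrow> ('w \<times> 'w) set" where
  "adjacency Es en1 en2 = {(en1 e, en2 e) | e. e \<in> Es} \<union> {(en2 e, en1 e) | e. e \<in> Es}"

definition unit_potential ::
    "'w set \<Rightarrow> 'e set \<Rightarrow> ('e \<Rightarrow> 'w) \<Rightarrow> ('e \<Rightarrow> 'w) \<Rightarrow> 'w \<Rightarrow> 'w \<Rightarrow> ('w \<Rightarrow> real) \<Rightarrow> bool" where
  "unit_potential W Es en1 en2 a b p \<longleftrightarrow>
     (\<forall>u. u \<notin> W \<longrightarrow> p u = 0) \<and> (\<Sum>u\<in>W. p u) = 0 \<and>
     (\<forall>v\<in>W. laplacian Es en1 en2 p v = (if v = b then 1 else 0) - (if v = a then 1 else 0))"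

definition graph_connected :: "'w set \<Rightarrow> 'e set \<Rightarrow> ('e \<Rightarrow> 'w) \<Rightarrow> ('e \<Rightarrow> 'w) \<Rightarrow> bool" where
  "graph_connected W Es en1 en2 \<longleftrightarrow> (\<forall>u\<in>W. \<forall>v\<in>W. (u, v) \<in> (adjacency Es en1 en2)\<^sup>*)"

lemma laplacian_diff:
  "laplacian Es en1 en2 (\<lambda>x. p x - q x) v = laplacian Es en1 en2 p v - laplacian Es en1 en2 q v"
proof -
  have "gradient en1 en2 (\<lambda>x. p x - q x) e = gradient en1 en2 p e - gradient en1 en2 q e" for e
    by (simp add: gradient_def)
  then show ?thesis
    by (simp add: laplacian_def right_diff_distrib sum_subtractf)
qed

lemma laplacian_eq_neighbour_sum:
  assumes "finite Es"
  shows "laplacian Es en1 en2 p v =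
      (\<Sum>e\<in>{e\<in>Es. en1 e = v}. p (en2 e)) + (\<Sum>e\<in>{e\<in>Es. en2 e = v}. p (en1 e))
      - real (card {e\<in>Es. en1 e = v} + card {e\<in>Es. en2 e = v}) * p v"
proof -
  have "laplacian Es en1 en2 p v =
      (\<Sum>e\<in>Es. (if en1 e = v then p (en2 e) - p v else 0) + (if en2 e = v then p (en1 e) - p v else 0))"
    unfolding laplacian_def sum_negf[symmetric]
    by (intro sum.cong) (auto simp: incidence_def gradient_def)
  also have "\<dots> = (\<Sum>e\<in>{e\<in>Es. en1 e = v}. p (en2 e) - p v) + (\<Sum>e\<in>{e\<in>Es. en2 e = v}. p (en1 e) - p v)"
    using assms by (simp add: sum.distrib sum.inter_filter)
  finally show ?thesis
    by (simp add: sum_subtractf algebra_simps)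
qed

locale finite_graph =
  fixes W :: "'w set" and Es :: "'e set" and en1 en2 :: "'e \<Rightarrow> 'w"
  assumes finite_nodes: "finite W" and finite_edges: "finite Es"
    and en1_in_nodes: "e \<in> Es \<Longrightarrow> en1 e \<in> W"
    and en2_in_nodes: "e \<in> Es \<Longrightarrow> en2 e \<in> W"
begin

lemma gradient_eq_sum_incidence:
  assumes "e \<in> Es"
  shows "gradient en1 en2 p e = (\<Sum>v\<in>W. p v * incidence en1 en2 v e)"
proof -
  have "(\<Sum>v\<in>W. p v * incidence en1 en2 v e)
      = (\<Sum>v\<in>W. if en2 e = v then p v else 0) - (\<Sum>v\<in>W. if en1 e = v then p v else 0)"
    unfolding sum_subtractf[symmetric] by (intro sum.cong) (auto simp: incidence_def)
  then show ?thesis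
    using assms en1_in_nodes en2_in_nodes finite_nodes by (simp add: gradient_def)
qed

lemma sum_gradient_mult:
  "(\<Sum>e\<in>Es. gradient en1 en2 p e * f e) = (\<Sum>v\<in>W. p v * (\<Sum>e\<in>Es. incidence en1 en2 v e * f e))"
  by (simp add: gradient_eq_sum_incidence sum_distrib_left sum_distrib_right mult.assoc
      sum.swap[of _ W] cong: sum.cong)

lemma green_identity:
  "(\<Sum>v\<in>W. q v * laplacian Es en1 en2 p v)
     = - (\<Sum>e\<in>Es. gradient en1 en2 q e * gradient en1 en2 p e)"
  by (simp add: sum_gradient_mult laplacian_def sum_negf)

lemma sum_laplacian: "(\<Sum>v\<in>W. laplacian Es en1 en2 p v) = 0"
  using green_identity[of "\<lambda>_. 1" p] by (simp add: gradient_def)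

lemma laplacian_eq_sum_kernel:
  "laplacian Es en1 en2 p u
     = (\<Sum>v\<in>W. (- (\<Sum>e\<in>Es. incidence en1 en2 u e * incidence en1 en2 v e)) * p v)"
  by (simp add: laplacian_def gradient_eq_sum_incidence sum_distrib_left sum_distrib_right
      sum_negf algebra_simps sum.swap[of _ W] cong: sum.cong)

lemma laplacian_cong:
  "(\<And>x. x \<in> W \<Longrightarrow> p x = q x) \<Longrightarrow> laplacian Es en1 en2 p v = laplacian Es en1 en2 q v"
  unfolding laplacian_def gradient_def using en1_in_nodes en2_in_nodes by simp

lemma harmonic_imp_constant:
  assumes conn: "graph_connected W Es en1 en2"
    and harmonic: "\<forall>v\<in>W. laplacian Es en1 en2 p v = 0"
    and "u \<in> W" "v \<in> W"
  shows "p u = p v"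
proof -
  have "(\<Sum>e\<in>Es. (gradient en1 en2 p e)\<^sup>2) = 0"
    using green_identity[of p p] harmonic by (simp add: power2_eq_square)
  then have edge: "\<forall>e\<in>Es. p (en1 e) = p (en2 e)"
    using finite_edges by (simp add: sum_nonneg_eq_0_iff gradient_def)
  have "p x = p y" if "(x, y) \<in> (adjacency Es en1 en2)\<^sup>*" for x y
    using that by (induction rule: rtrancl_induct) (use edge in \<open>auto simp: adjacency_def\<close>)
  then show ?thesis
    using conn assms(3,4) unfolding graph_connected_def by blast
qed

lemma harmonic_sum_zero_imp_zero:
  assumes conn: "graph_connected W Es en1 en2"
    and harmonic: "\<forall>v\<in>W. laplacian Es en1 en2 p v = 0"
    and sum_zero: "(\<Sum>v\<in>W. p v) = 0" and u: "u \<in> W"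
  shows "p u = 0"
proof -
  have "(\<Sum>v\<in>W. p v) = (\<Sum>v\<in>W. p u)"
    using harmonic_imp_constant[OF conn harmonic _ u] by simp
  moreover have "card W > 0"
    using finite_nodes u card_gt_0_iff by blast
  ultimately show ?thesis
    using sum_zero by simp
qed

lemma unit_potential_unique:
  assumes conn: "graph_connected W Es en1 en2"
    and p: "unit_potential W Es en1 en2 a b p" and q: "unit_potential W Es en1 en2 a b q"
  shows "p = q"
proof
  fix u
  show "p u = q u"
  proof (cases "u \<in> W")
    case True
    have "(\<lambda>x. p x - q x) u = 0"
      using p q harmonic_sum_zero_imp_zero[OF conn _ _ True, of "\<lambda>x. p x - q x"]
      by (simp add: unit_potential_def laplacian_diff sum_subtractf)
    then show ?thesis by simp
  next
    case False
    then show ?thesis using p q by (simp add: unit_potential_def)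
  qed
qed

lemma unit_potential_exists:
  assumes conn: "graph_connected W Es en1 en2" and a: "a \<in> W" and b: "b \<in> W"
  obtains p where "unit_potential W Es en1 en2 a b p"
proof -
  define c where "c v = (if v = b then 1 else 0) - (if v = a then 1 else (0::real))" for v
  \<comment> \<open>Adding the all-ones matrix makes the Laplacian injective; on functions of sum zero it acts unchanged.\<close>
  define K where "K u v = 1 - (\<Sum>e\<in>Es. incidence en1 en2 u e * incidence en1 en2 v e)" for u v
  have K: "(\<Sum>v\<in>W. K u v * p v) = laplacian Es en1 en2 p u + (\<Sum>v\<in>W. p v)" for u p
    by (simp add: K_def laplacian_eq_sum_kernel left_diff_distrib sum_subtractf sum_negf)
  have sum_K: "(\<Sum>u\<in>W. \<Sum>v\<in>W. K u v * p v) = real (card W) * (\<Sum>v\<in>W. p v)" for p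
    by (simp add: K sum.distrib sum_laplacian)
  have card_W: "real (card W) \<noteq> 0"
    using finite_nodes a by auto
  have inj: "\<forall>u\<in>W. q u = 0" if q: "\<forall>u\<in>W. (\<Sum>v\<in>W. K u v * q v) = 0" for q
  proof -
    have "(\<Sum>v\<in>W. q v) = 0"
      using sum_K[of q] q card_W by simp
    then show ?thesis
      using q K harmonic_sum_zero_imp_zero[OF conn] by simp
  qed
  obtain p where p: "\<forall>u\<in>W. (\<Sum>v\<in>W. K u v * p v) = c u"
    by (rule linear_system_solvable_if_injective[OF finite_nodes inj])
  have "(\<Sum>u\<in>W. c u) = 0"
    using a b finite_nodes by (simp add: c_def sum_subtractf)
  then have sum_p: "(\<Sum>v\<in>W. p v) = 0"
    using sum_K[of p] p card_W by simp
  show thesis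
  proof (rule that[of "\<lambda>u. if u \<in> W then p u else 0"])
    have "laplacian Es en1 en2 (\<lambda>u. if u \<in> W then p u else 0) v = laplacian Es en1 en2 p v" for v
      by (rule laplacian_cong) simp
    then show "unit_potential W Es en1 en2 a b (\<lambda>u. if u \<in> W then p u else 0)"
      using p K sum_p by (simp add: unit_potential_def c_def)
  qed
qed

lemma harm_unit_potential:
  assumes conn: "graph_connected W Es en1 en2" and a: "a \<in> W" and b: "b \<in> W"
  shows "unit_potential W Es en1 en2 a b (harm W Es en1 en2 a b)"
proof -
  obtain p where p: "unit_potential W Es en1 en2 a b p"
    using unit_potential_exists[OF assms] .
  have "harm W Es en1 en2 a b = (THE p. unit_potential W Es en1 en2 a b p)"
    unfolding harm_def unit_potential_def laplacian_eq_neighbour_sum[OF finite_edges] ..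
  also have "\<dots> = p"
    using p unit_potential_unique[OF conn _ p] by (rule the_equality)
  finally show ?thesis
    using p by simp
qed

end

section \<open>Orbits\<close>

lemma funpow_period:
  assumes D: "finite D" and f: "bij_betw f D D" and x: "x \<in> D"
  obtains n where "n > 0" "(f ^^ n) x = x"
proof -
  have "\<not> inj_on (\<lambda>k. (f ^^ k) x) {..card D}"
  proof
    assume "inj_on (\<lambda>k. (f ^^ k) x) {..card D}"
    moreover have "(\<lambda>k. (f ^^ k) x) ` {..card D} \<subseteq> D"
      using bij_betw_apply[OF bij_betw_funpow[OF f] x] by auto
    ultimately have "card {..card D} \<le> card D"
      by (rule card_inj_on_le[OF _ _ D])
    then show False by simp
  qed
  then obtain i j where "i \<noteq> j" "(f ^^ i) x = (f ^^ j) x"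
    unfolding inj_on_def by blast
  then obtain i j where ij: "i < j" "(f ^^ i) x = (f ^^ j) x"
    by (metis linorder_neqE_nat)
  then have "(f ^^ i) ((f ^^ (j - i)) x) = (f ^^ i) x"
    by (metis funpow_add o_apply le_add_diff_inverse less_imp_le)
  moreover have "inj_on (f ^^ i) D" "(f ^^ (j - i)) x \<in> D"
    using bij_betw_funpow[OF f] x by (auto simp: bij_betw_def)
  ultimately have "(f ^^ (j - i)) x = x"
    using x by (auto simp: inj_on_def)
  then show thesis
    using that[of "j - i"] ij(1) by simp
qed

lemma orb_apply:
  assumes "finite D" "bij_betw f D D" "x \<in> D"
  shows "orb f (f x) = orb f x"
proof -
  obtain n where n: "n > 0" "(f ^^ n) x = x"
    using funpow_period[OF assms] .
  have shift_forward: "(f ^^ m) (f x) = (f ^^ Suc m) x" for m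
    by (simp only: funpow_Suc_right o_apply)
  have "(f ^^ (n - 1)) (f x) = x"
    using shift_forward[of "n - 1"] n by simp
  then have shift_back: "(f ^^ m) x = (f ^^ (m + (n - 1))) (f x)" for m
    by (simp add: funpow_add)
  show ?thesis
  proof
    show "orb f (f x) \<subseteq> orb f x"
    proof
      fix y assume "y \<in> orb f (f x)"
      then obtain m where "y = (f ^^ Suc m) x"
        unfolding orb_def shift_forward by blast
      then show "y \<in> orb f x"
        unfolding orb_def by (rule range_eqI[of _ "\<lambda>n. (f ^^ n) x"])
    qed
    show "orb f x \<subseteq> orb f (f x)"
    proof
      fix y assume "y \<in> orb f x"
      then obtain m where "y = (f ^^ (m + (n - 1))) (f x)"
        unfolding orb_def shift_back by blast
      then show "y \<in> orb f (f x)"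
        unfolding orb_def by (rule range_eqI[of _ "\<lambda>n. (f ^^ n) (f x)"])
    qed
  qed
qed

section \<open>Orthogonal projection onto smooth circulations\<close>

lemma ip_commute: "ip E f g = ip E g f"
  by (simp add: ip_def mult.commute)

lemma ip_diff_left: "ip E (\<lambda>e. f e - g e) h = ip E f h - ip E g h"
  by (simp add: ip_def left_diff_distrib sum_subtractf)

lemma ip_chi:
  assumes "finite E" "a \<in> E"
  shows "ip E (chi a) f = f a"
proof -
  have "ip E (chi a) f = (\<Sum>e\<in>E. if e = a then f e else 0)"
    unfolding ip_def chi_def by (rule sum.cong) auto
  then show ?thesis
    using assms by simp
qed

lemma circs_diff: "x \<in> circs E \<sigma> \<Longrightarrow> y \<in> circs E \<sigma> \<Longrightarrow> (\<lambda>e. x e - y e) \<in> circs E \<sigma>"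
  by (simp add: circs_def ip_diff_left)

definition circ_projection :: "'e set \<Rightarrow> ('e \<times> bool \<Rightarrow> 'e \<times> bool) \<Rightarrow> 'e \<Rightarrow> ('e \<Rightarrow> real) \<Rightarrow> bool" where
  "circ_projection E \<sigma> a x \<longleftrightarrow> x \<in> circs E \<sigma> \<and> (\<forall>y\<in>circs E \<sigma>. ip E (\<lambda>e. chi a e - x e) y = 0)"

lemma circ_projection_unique:
  assumes E: "finite E" and x: "circ_projection E \<sigma> a x" and x': "circ_projection E \<sigma> a x'"
  shows "x = x'"
proof -
  define d where "d = (\<lambda>e. x e - x' e)"
  have d: "d \<in> circs E \<sigma>"
    using x x' circs_diff unfolding circ_projection_def d_def by blast
  have "ip E d d = ip E x d - ip E x' d"
    unfolding d_def by (rule ip_diff_left)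
  also have "\<dots> = ip E (\<lambda>e. chi a e - x' e) d - ip E (\<lambda>e. chi a e - x e) d"
    by (simp add: ip_diff_left)
  also have "\<dots> = 0"
    using x x' d by (simp add: circ_projection_def)
  finally have "\<forall>e\<in>E. d e = 0"
    using E by (simp add: ip_def sum_nonneg_eq_0_iff)
  moreover have "\<forall>e. e \<notin> E \<longrightarrow> d e = 0"
    using d by (simp add: circs_def)
  ultimately show ?thesis
    unfolding d_def by fastforce
qed

lemma eta_eqI: "finite E \<Longrightarrow> circ_projection E \<sigma> a x \<Longrightarrow> eta E \<sigma> a = x"
  unfolding eta_def circ_projection_def[symmetric]
  by (rule the_equality) (auto intro: circ_projection_unique)

lemma circ_projection_symmetric:
  assumes E: "finite E" "a \<in> E" "b \<in> E"
    and x: "circ_projection E \<sigma> a x" and y: "circ_projection E \<sigma> b y"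
  shows "x b = y a"
proof -
  have "x b = ip E (chi b) x"
    using E by (simp add: ip_chi)
  also have "\<dots> = ip E y x"
    using x y ip_diff_left[of E "chi b" y x] by (simp add: circ_projection_def)
  also have "\<dots> = ip E (chi a) y"
    using x y ip_diff_left[of E "chi a" x y] by (simp add: circ_projection_def ip_commute)
  also have "\<dots> = y a"
    using E by (simp add: ip_chi)
  finally show ?thesis .
qed

section \<open>Maps\<close>

lemma rtrancl_map_on:
  assumes "(x, y) \<in> r\<^sup>*" "x \<in> D"
    and "\<And>u v. (u, v) \<in> r \<Longrightarrow> u \<in> D \<Longrightarrow> v \<in> D \<and> (h u, h v) \<in> s\<^sup>*"
  shows "(h x, h y) \<in> s\<^sup>*"
proof -
  have "y \<in> D \<and> (h x, h y) \<in> s\<^sup>*"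
    using assms(1)
  proof (induction rule: rtrancl_induct)
    case base
    then show ?case using assms(2) by simp
  next
    case (step y z)
    with assms(3)[OF step.hyps(2)] show ?case
      by (blast intro: rtrancl_trans)
  qed
  then show ?thesis ..
qed

lemma alpha_in_darts: "d \<in> darts E \<Longrightarrow> alpha d \<in> darts E"
  by (auto simp: darts_def alpha_def)

lemma bij_alpha: "bij_betw alpha (darts E) (darts E)"
  by (rule bij_betwI[of _ _ _ alpha]) (auto simp: alpha_def darts_def)

lemma deltav_eq_incidence: "e \<in> E \<Longrightarrow> deltav E \<sigma> v e = incidence (tailv \<sigma>) (headv \<sigma>) v e"
  by (simp add: deltav_def incidence_def)

lemma bdry_eq_incidence: "e \<in> E \<Longrightarrow> bdry E \<sigma> F e = incidence (lshore \<sigma>) (rshore \<sigma>) F e"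
  by (simp add: bdry_def incidence_def)

lemma ip_gradient_deltav:
  "ip E (gradient (tailv \<sigma>) (headv \<sigma>) p) (deltav E \<sigma> v) = - laplacian E (tailv \<sigma>) (headv \<sigma>) p v"
  unfolding ip_def laplacian_def by (simp add: deltav_eq_incidence mult.commute cong: sum.cong)

lemma ip_gradient_bdry:
  "ip E (gradient (lshore \<sigma>) (rshore \<sigma>) q) (bdry E \<sigma> F) = - laplacian E (lshore \<sigma>) (rshore \<sigma>) q F"
  unfolding ip_def laplacian_def by (simp add: bdry_eq_incidence mult.commute cong: sum.cong)

context
  fixes E :: "'e set" and \<sigma> :: "'e \<times> bool \<Rightarrow> 'e \<times> bool"
  assumes map: "is_map E \<sigma>"
begin

lemma finite_darts: "finite (darts E)"
  using map by (simp add: is_map_def darts_def)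

lemma bij_sigma: "bij_betw \<sigma> (darts E) (darts E)"
  using map by (simp add: is_map_def)

lemma bij_facep: "bij_betw (facep \<sigma>) (darts E) (darts E)"
  unfolding facep_def by (rule bij_betw_trans[OF bij_alpha bij_sigma])

lemma primal_graph: "finite_graph (verts E \<sigma>) E (tailv \<sigma>) (headv \<sigma>)"
  using map finite_darts
  by unfold_locales (auto simp: is_map_def verts_def tailv_def headv_def darts_def)

lemma dual_graph: "finite_graph (faces E \<sigma>) E (lshore \<sigma>) (rshore \<sigma>)"
  using map finite_darts
  by unfold_locales (auto simp: is_map_def faces_def lshore_def rshore_def darts_def)

lemma darts_connected:
  assumes "d \<in> darts E" "d' \<in> darts E"
  shows "(d, d') \<in> ({(x, \<sigma> x) | x. True} \<union> {(x, alpha x) | x. True})\<^sup>*"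
  using map assms by (simp add: is_map_def)

lemma orbit_classes_connected:
  assumes alpha_step: "\<And>x. x \<in> darts E \<Longrightarrow> (cls x, cls (alpha x)) \<in> R\<^sup>*"
    and sigma_step: "\<And>x. x \<in> darts E \<Longrightarrow> (cls x, cls (\<sigma> x)) \<in> R\<^sup>*"
  shows "\<forall>u\<in>cls ` darts E. \<forall>v\<in>cls ` darts E. (u, v) \<in> R\<^sup>*"
proof (intro ballI)
  fix u v assume "u \<in> cls ` darts E" "v \<in> cls ` darts E"
  then obtain d d' where d: "d \<in> darts E" "u = cls d" and d': "d' \<in> darts E" "v = cls d'"
    by blast
  show "(u, v) \<in> R\<^sup>*"
    unfolding d d'
    by (rule rtrancl_map_on[OF darts_connected[OF d(1) d'(1)] d(1)])
      (auto intro: alpha_step sigma_step alpha_in_darts bij_betw_apply[OF bij_sigma])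
qed

lemma primal_connected: "graph_connected (verts E \<sigma>) E (tailv \<sigma>) (headv \<sigma>)"
  unfolding graph_connected_def verts_def
proof (rule orbit_classes_connected)
  fix x assume x: "x \<in> darts E"
  then show "(orb \<sigma> x, orb \<sigma> (alpha x)) \<in> (adjacency E (tailv \<sigma>) (headv \<sigma>))\<^sup>*"
    by (cases x, cases "snd x") (auto simp: darts_def alpha_def adjacency_def tailv_def headv_def)
  show "(orb \<sigma> x, orb \<sigma> (\<sigma> x)) \<in> (adjacency E (tailv \<sigma>) (headv \<sigma>))\<^sup>*"
    using orb_apply[OF finite_darts bij_sigma x] by simp
qed

lemma dual_connected: "graph_connected (faces E \<sigma>) E (lshore \<sigma>) (rshore \<sigma>)"
  unfolding graph_connected_def faces_def
proof (rule orbit_classes_connected)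
  fix x assume x: "x \<in> darts E"
  have edge: "(orb (facep \<sigma>) x, orb (facep \<sigma>) (alpha x)) \<in> (adjacency E (lshore \<sigma>) (rshore \<sigma>))\<^sup>*"
    using x by (cases x, cases "snd x") (auto simp: darts_def alpha_def adjacency_def lshore_def rshore_def)
  then show "(orb (facep \<sigma>) x, orb (facep \<sigma>) (alpha x)) \<in> (adjacency E (lshore \<sigma>) (rshore \<sigma>))\<^sup>*" .
  have "\<sigma> x = facep \<sigma> (alpha x)"
    by (simp add: facep_def alpha_def)
  then show "(orb (facep \<sigma>) x, orb (facep \<sigma>) (\<sigma> x)) \<in> (adjacency E (lshore \<sigma>) (rshore \<sigma>))\<^sup>*"
    using orb_apply[OF finite_darts bij_facep alpha_in_darts[OF x]] edge by simp
qed

lemma bdry_orthogonal_deltav: "ip E (bdry E \<sigma> F) (deltav E \<sigma> w) = 0"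
proof -
  let ?\<phi> = "facep \<sigma>"
  define h where
    "h d = (if orb ?\<phi> d = F then 1 else 0) * (if orb \<sigma> d = w then 1 else (0::real))" for d
  have orbs: "orb \<sigma> (?\<phi> d) = orb \<sigma> (alpha d)" "orb ?\<phi> (?\<phi> d) = orb ?\<phi> d"
    if "d \<in> darts E" for d
    using orb_apply[OF finite_darts bij_sigma alpha_in_darts[OF that]]
      orb_apply[OF finite_darts bij_facep that] by (simp_all add: facep_def)
  \<comment> \<open>Each term splits over the two darts of the edge and telescopes along \<open>facep \<sigma>\<close>.\<close>
  have "bdry E \<sigma> F e * deltav E \<sigma> w e = (\<Sum>s\<in>UNIV. h (?\<phi> (e, s)) - h (e, s))" if "e \<in> E" for e
    using that orbs[of "(e, True)"] orbs[of "(e, False)"]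
    by (simp add: UNIV_bool h_def bdry_def deltav_def rshore_def lshore_def headv_def tailv_def
        alpha_def darts_def)
  then have "ip E (bdry E \<sigma> F) (deltav E \<sigma> w) = (\<Sum>e\<in>E. \<Sum>s\<in>UNIV. h (?\<phi> (e, s)) - h (e, s))"
    by (simp add: ip_def)
  also have "\<dots> = (\<Sum>d\<in>darts E. h (?\<phi> d)) - (\<Sum>d\<in>darts E. h d)"
    by (simp add: darts_def sum.cartesian_product sum_subtractf)
  also have "\<dots> = 0"
    using sum.reindex_bij_betw[OF bij_facep, of h] by simp
  finally show ?thesis .
qed

lemma laplacian_pie:
  "b \<in> E \<Longrightarrow> v \<in> verts E \<sigma> \<Longrightarrow> laplacian E (tailv \<sigma>) (headv \<sigma>) (pie E \<sigma> b) v = deltav E \<sigma> v b"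
  using finite_graph.harm_unit_potential[OF primal_graph primal_connected
      finite_graph.en1_in_nodes[OF primal_graph] finite_graph.en2_in_nodes[OF primal_graph]]
  by (auto simp: pie_def unit_potential_def deltav_def)

lemma laplacian_piestar:
  "b \<in> E \<Longrightarrow> F \<in> faces E \<sigma> \<Longrightarrow> laplacian E (lshore \<sigma>) (rshore \<sigma>) (piestar E \<sigma> b) F = bdry E \<sigma> F b"
  using finite_graph.harm_unit_potential[OF dual_graph dual_connected
      finite_graph.en1_in_nodes[OF dual_graph] finite_graph.en2_in_nodes[OF dual_graph]]
  by (auto simp: piestar_def unit_potential_def bdry_def)

lemma ip_gradient_verts:
  "ip E (gradient (tailv \<sigma>) (headv \<sigma>) p) f = (\<Sum>v\<in>verts E \<sigma>. p v * ip E f (deltav E \<sigma> v))"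
  unfolding ip_def finite_graph.sum_gradient_mult[OF primal_graph]
  by (simp add: deltav_eq_incidence mult.commute cong: sum.cong)

lemma ip_gradient_faces:
  "ip E (gradient (lshore \<sigma>) (rshore \<sigma>) q) f = (\<Sum>F\<in>faces E \<sigma>. q F * ip E f (bdry E \<sigma> F))"
  unfolding ip_def finite_graph.sum_gradient_mult[OF dual_graph]
  by (simp add: bdry_eq_incidence mult.commute cong: sum.cong)

lemma circ_projection_potentials:
  assumes b: "b \<in> E"
  shows "circ_projection E \<sigma> b (\<lambda>e. if e \<in> E then chi b e
      + gradient (tailv \<sigma>) (headv \<sigma>) (pie E \<sigma> b) e
      + gradient (lshore \<sigma>) (rshore \<sigma>) (piestar E \<sigma> b) e else 0)"
    (is "circ_projection E \<sigma> b ?x")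
proof -
  define gv where "gv = gradient (tailv \<sigma>) (headv \<sigma>) (pie E \<sigma> b)"
  define gf where "gf = gradient (lshore \<sigma>) (rshore \<sigma>) (piestar E \<sigma> b)"
  have E: "finite E"
    using map by (simp add: is_map_def)
  have x_pair: "ip E ?x f = f b + ip E gv f + ip E gf f" for f
  proof -
    have "ip E ?x f = ip E (chi b) f + ip E gv f + ip E gf f"
      unfolding ip_def gv_def gf_def by (simp add: sum.distrib distrib_right)
    then show ?thesis
      using E b by (simp add: ip_chi)
  qed
  have "?x \<in> circs E \<sigma>"
    unfolding circs_def
  proof (intro CollectI conjI allI impI ballI)
    fix v assume v: "v \<in> verts E \<sigma>"
    have "ip E (deltav E \<sigma> v) (bdry E \<sigma> F) = 0" for F
      using bdry_orthogonal_deltav ip_commute by metis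
    then show "ip E ?x (deltav E \<sigma> v) = 0"
      using v b by (simp add: x_pair gv_def gf_def ip_gradient_deltav laplacian_pie ip_gradient_faces)
  next
    fix F assume "F \<in> faces E \<sigma>"
    then show "ip E ?x (bdry E \<sigma> F) = 0"
      using b by (simp add: x_pair gv_def gf_def ip_gradient_bdry laplacian_piestar ip_gradient_verts
          bdry_orthogonal_deltav)
  qed simp
  moreover have "ip E (\<lambda>e. chi b e - ?x e) y = 0" if "y \<in> circs E \<sigma>" for y
  proof -
    have "ip E (\<lambda>e. chi b e - ?x e) y = - (ip E gv y + ip E gf y)"
      using x_pair[of y] E b by (simp add: ip_diff_left ip_chi)
    then show ?thesis
      using that by (simp add: gv_def gf_def ip_gradient_verts ip_gradient_faces circs_def)
  qed
  ultimately show ?thesis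
    by (simp add: circ_projection_def)
qed

end

theorem mainTheorem4:
  fixes E :: "'e set" and \<sigma> :: "'e \<times> bool \<Rightarrow> 'e \<times> bool" and a b :: 'e
  assumes "is_map E \<sigma>" and "a \<in> E" and "b \<in> E"
  shows "eta E \<sigma> a b =
    (if a = b then
       pie E \<sigma> b (headv \<sigma> a) - pie E \<sigma> b (tailv \<sigma> a)
       + piestar E \<sigma> b (rshore \<sigma> a) - piestar E \<sigma> b (lshore \<sigma> a) + 1
     else
       pie E \<sigma> b (headv \<sigma> a) - pie E \<sigma> b (tailv \<sigma> a)
       + piestar E \<sigma> b (rshore \<sigma> a) - piestar E \<sigma> b (lshore \<sigma> a))"
proof -
  have E: "finite E"
    using assms(1) by (simp add: is_map_def)
  define x where "x c = (\<lambda>e. if e \<in> E then chi c e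
      + gradient (tailv \<sigma>) (headv \<sigma>) (pie E \<sigma> c) e
      + gradient (lshore \<sigma>) (rshore \<sigma>) (piestar E \<sigma> c) e else 0)" for c
  have x: "circ_projection E \<sigma> c (x c)" if "c \<in> E" for c
    unfolding x_def by (rule circ_projection_potentials[OF assms(1) that])
  have "eta E \<sigma> a b = x a b"
    using eta_eqI[OF E x[OF assms(2)]] by simp
  also have "\<dots> = x b a"
    by (rule circ_projection_symmetric[OF E assms(2,3) x[OF assms(2)] x[OF assms(3)]])
  finally show ?thesis
    using assms(2) by (simp add: x_def gradient_def chi_def)
qed

end
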